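(* Let $(Y, S, A, \mathbf{X}^{P}, \mathbf{X}^{S})$ be jointly distributed random variables describing a unit drawn from an infinite population, where $Y$ is a real-valued outcome with $\mathbb{E}|Y|<\infty$, $S \in \{0,1\}$ is the survey inclusion indicator, $A \in \{1,\ldots,J\}$ is the area indicator, $\mathbf{X}^{P}$ (taking values in $\mathcal{X}^{P}$) are population covariates and $\mathbf{X}^{S}$ (taking values in $\mathcal{X}^{S}$) are survey-only covariates. Fix $j \in \{1,\ldots,J\}$ with $\Pr(A=j)>0$. Suppose: (Sampling ignorability) (a) $Y \perp\!\!\!\perp S \mid \mathbf{X}^{P}, A$, and (b) $0 < \Pr(S=1 \mid \mathbf{X}^{P}, A) < 1$ for all values of $\mathbf{X}^{P} \in \mathcal{X}^{P}$; (Area ignorability) (a) $Y \perp\!\!\!\perp A \mid \mathbf{X}^{P}, \mathbf{X}^{S}, S=1$, and (b) $0 < \Pr(A=j \mid \mathbf{X}^{P}, \mathbf{X}^{S}, S=1) < 1$ for all $(\mathbf{X}^{P}, \mathbf{X}^{S}) \in \mathcal{X}^{P}\times\mathcal{X}^{S}$. Then the area mean $\tau_j = \mathbb{E}[Y \mid A=j]$ is nonparametrically identified as $$\tau_j = \mathbb{E}\left\{ \frac{\mathbf{1}\{S=1\}}{\Pr(A=j)} \cdot \frac{\Pr(A=j \mid \mathbf{X}^{P}, \mathbf{X}^{S}, S=1)}{\Pr(A=j \mid \mathbf{X}^{P}, S=1)} \cdot \frac{\Pr(A=j \mid \mathbf{X}^{P})}{\Pr(S=1 \mid \mathbf{X}^{P})}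 \, Y \right\}.$$
   Context: Notation: $\perp\!\!\!\perp$ denotes conditional independence; $\mathbf{1}\{\cdot\}$ is the indicator function. The estimand for area $j$ is $\tau_j = \mathbb{E}[Y\mid A=j]$, the population mean of the outcome among units in area $j$. *)

theory Defs
  imports "HOL-Probability.Probability"
begin

definition sigma_gen :: "'a measure \<Rightarrow> ('a \<Rightarrow> 'b) \<Rightarrow> 'b measure \<Rightarrow> 'a measure" where
  "sigma_gen M X N = vimage_algebra (space M) X N"

definition cond_prob :: "'a measure \<Rightarrow> 'a measure \<Rightarrow> 'a set \<Rightarrow> ('a \<Rightarrow> real)" where
  "cond_prob M F E = real_cond_exp M F (indicator E)"

text \<open>conditional independence of the sigma-algebras G1 and G2 given F, on the event E
  (E is assumed to be F-measurable; E = space M gives ordinary conditional independence)\<close>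
definition cond_indep_on :: "'a measure \<Rightarrow> 'a set \<Rightarrow> 'a measure \<Rightarrow> 'a measure \<Rightarrow> 'a measure \<Rightarrow> bool" where
  "cond_indep_on M E F G1 G2 \<longleftrightarrow>
     (\<forall>B1\<in>sets G1. \<forall>B2\<in>sets G2. AE \<omega> in M. \<omega> \<in> E \<longrightarrow>
        cond_prob M F (B1 \<inter> B2) \<omega> = cond_prob M F B1 \<omega> * cond_prob M F B2 \<omega>)"

definition event_mean :: "'a measure \<Rightarrow> ('a \<Rightarrow> real) \<Rightarrow> 'a set \<Rightarrow> real" where
  "event_mean M Y E = (\<integral>\<omega>. indicator E \<omega> * Y \<omega> \<partial>M) / measure M E"

end

(* Both sides are means of Y under nonnegative weights, so it suffices that the two weights
   give every event E of sigma(Y) the same mass.  Conditioning on (XP, A) and using sampling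
   ignorability, 1{A = j} may be replaced by 1{A = j} 1{S = 1} / P(S = 1 | XP, A); conditioning
   on (XP, XS, S) and using area ignorability on the sample, 1{S = 1} P(A = j | XP, XS, S = 1)
   may be replaced by 1{S = 1} 1{A = j}.  The two resulting weights agree because both
   P(S = 1 | XP, A) on {A = j} and P(A = j | XP, S) on {S = 1} are ratios of
   P(S = 1, A = j | XP) by P(A = j | XP) and P(S = 1 | XP) respectively. *)
theory Submission
  imports Defs
begin

lemma space_sigma_gen [simp]: "space (sigma_gen M W N) = space M"
  unfolding sigma_gen_def by simp

lemma subalgebra_sigma_gen:
  assumes "X \<in> measurable H N" "space H = space M"
  shows "subalgebra H (sigma_gen M X N)"
  using sets_image_in_sets[OF assms(2,1)] assms(2)
  by (simp add: subalgebra_def sigma_gen_def)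

lemma sets_sigma_gen_subset: "W \<in> measurable M N \<Longrightarrow> sets (sigma_gen M W N) \<subseteq> sets M"
  using subalgebra_sigma_gen[of W M N M] by (simp add: subalgebra_def)

lemma measurable_sigma_gen:
  assumes "W \<in> measurable M N" "g \<in> measurable N K"
  shows "(\<lambda>\<omega>. g (W \<omega>)) \<in> measurable (sigma_gen M W N) K"
  unfolding sigma_gen_def
  by (rule measurable_compose[OF measurable_vimage_algebra1 assms(2)])
    (use measurable_space[OF assms(1)] in auto)

lemma subalgebra_sigma_gen_comp:
  assumes "W \<in> measurable M N" "g \<in> measurable N K"
  shows "subalgebra (sigma_gen M W N) (sigma_gen M (\<lambda>\<omega>. g (W \<omega>)) K)"
  by (rule subalgebra_sigma_gen[OF measurable_sigma_gen[OF assms]]) simp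

lemma level_set_in_sigma_gen:
  assumes "W \<in> measurable M N" "g \<in> measurable N (count_space UNIV)"
  shows "{\<omega>\<in>space M. g (W \<omega>) = c} \<in> sets (sigma_gen M W N)"
proof -
  have "(\<lambda>\<omega>. g (W \<omega>)) \<in> measurable (sigma_gen M W N) (count_space UNIV)"
    by (rule measurable_sigma_gen[OF assms])
  then have "{\<omega>\<in>space (sigma_gen M W N). g (W \<omega>) = c} \<in> sets (sigma_gen M W N)"
    by measurable
  then show ?thesis by simp
qed

lemma sigma_finite_subalgebra_sigma_gen:
  assumes "finite_measure M" "W \<in> measurable M N"
  shows "sigma_finite_subalgebra M (sigma_gen M W N)"
proof -
  interpret finite_measure M by fact
  have "finite_measure_subalgebra M (sigma_gen M W N)"
    by unfold_locales (rule subalgebra_sigma_gen[OF assms(2) refl])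
  then show ?thesis by (rule finite_measure_subalgebra_is_sigma_finite)
qed

lemma borel_measurable_cond_prob: "cond_prob M F T \<in> borel_measurable F"
  unfolding cond_prob_def by simp

lemma borel_measurable_cond_prob2 [measurable]: "cond_prob M F T \<in> borel_measurable M"
  unfolding cond_prob_def by simp

context sigma_finite_subalgebra
begin

lemma AE_cond_prob_nonneg:
  assumes "T \<in> sets M"
  shows "AE x in M. 0 \<le> cond_prob M F T x"
  unfolding cond_prob_def by (rule real_cond_exp_pos) (use assms in auto)

lemma AE_cond_prob_mono:
  assumes "finite_measure M" "T \<in> sets M" "U \<in> sets M" "T \<subseteq> U"
  shows "AE x in M. cond_prob M F T x \<le> cond_prob M F U x"
proof -
  interpret finite_measure M by fact
  have "integrable M (indicator V :: 'a \<Rightarrow> real)" if "V \<in> sets M" for V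
    by (rule integrable_const_bound[where B=1]) (use that in auto)
  then show ?thesis
    unfolding cond_prob_def
    by (intro real_cond_exp_mono) (use assms in \<open>auto simp: indicator_def\<close>)
qed

lemma AE_cond_prob_eq_nn_cond_exp:
  assumes "finite_measure M" "T \<in> sets M"
  shows "AE x in M. ennreal (cond_prob M F T x) = nn_cond_exp M F (\<lambda>x. ennreal (indicator T x)) x"
proof -
  have neg: "(\<lambda>x. ennreal (- indicator T x :: real)) = (\<lambda>x. 0)"
    by (auto simp: indicator_def fun_eq_iff ennreal_neg)
  have zero: "AE x in M. nn_cond_exp M F (\<lambda>x. 0) x = 0"
    using nn_cond_exp_F_meas[of "\<lambda>x. 0"] by auto
  have "(\<integral>\<^sup>+ x. 1 * nn_cond_exp M F (\<lambda>x. ennreal (indicator T x)) x \<partial>M) = (\<integral>\<^sup>+ x. 1 * ennreal (indicator T x) \<partial>M)"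
    by (rule nn_cond_exp_intg) (use assms(2) in auto)
  then have "(\<integral>\<^sup>+ x. nn_cond_exp M F (\<lambda>x. ennreal (indicator T x)) x \<partial>M) \<noteq> \<infinity>"
    using assms finite_measure.emeasure_finite by (simp add: ennreal_indicator)
  then have "AE x in M. nn_cond_exp M F (\<lambda>x. ennreal (indicator T x)) x \<noteq> \<infinity>"
    by (intro nn_integral_PInf_AE) auto
  with zero show ?thesis
    by eventually_elim (auto simp: cond_prob_def real_cond_exp_def neg ennreal_enn2real_if)
qed

lemma nn_integral_mult_cond_prob:
  assumes "finite_measure M" "T \<in> sets M" "h \<in> borel_measurable F" "AE x in M. 0 \<le> h x"
  shows "(\<integral>\<^sup>+ x. ennreal (h x * cond_prob M F T x) \<partial>M) = (\<integral>\<^sup>+ x. ennreal (h x * indicator T x) \<partial>M)"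
proof -
  have "(\<integral>\<^sup>+ x. ennreal (h x * cond_prob M F T x) \<partial>M)
      = (\<integral>\<^sup>+ x. ennreal (h x) * nn_cond_exp M F (\<lambda>x. ennreal (indicator T x)) x \<partial>M)"
    using AE_cond_prob_eq_nn_cond_exp[OF assms(1,2)] assms(4)
    by (intro nn_integral_cong_AE) (auto simp: ennreal_mult')
  also have "\<dots> = (\<integral>\<^sup>+ x. ennreal (h x) * ennreal (indicator T x) \<partial>M)"
    by (rule nn_cond_exp_intg) (use assms in auto)
  also have "\<dots> = (\<integral>\<^sup>+ x. ennreal (h x * indicator T x) \<partial>M)"
    using assms(4) by (intro nn_integral_cong_AE) (auto simp: ennreal_mult' ennreal_indicator)
  finally show ?thesis .
qed

lemma nn_integral_mult_cond_prob_cond_indep: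
  assumes "finite_measure M" "E \<in> sets M" "B \<in> sets M"
    and "h \<in> borel_measurable F" "AE x in M. 0 \<le> h x"
    and "AE x in M. h x \<noteq> 0 \<longrightarrow> cond_prob M F (E \<inter> B) x = cond_prob M F E x * cond_prob M F B x"
  shows "(\<integral>\<^sup>+ x. ennreal (h x * cond_prob M F B x * indicator E x) \<partial>M)
       = (\<integral>\<^sup>+ x. ennreal (h x * indicator (E \<inter> B) x) \<partial>M)"
proof -
  have [measurable]: "h \<in> borel_measurable F" by fact
  have "(\<lambda>x. h x * cond_prob M F B x) \<in> borel_measurable F"
    using borel_measurable_cond_prob by measurable
  moreover have "AE x in M. 0 \<le> h x * cond_prob M F B x"
    using assms(5) AE_cond_prob_nonneg[OF assms(3)] by eventually_elim simp
  ultimately have "(\<integral>\<^sup>+ x. ennreal (h x * cond_prob M F B x * indicator E x) \<partial>M)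
      = (\<integral>\<^sup>+ x. ennreal (h x * cond_prob M F B x * cond_prob M F E x) \<partial>M)"
    by (rule nn_integral_mult_cond_prob[OF assms(1,2), symmetric])
  also have "\<dots> = (\<integral>\<^sup>+ x. ennreal (h x * cond_prob M F (E \<inter> B) x) \<partial>M)"
    using assms(6) by (intro nn_integral_cong_AE) (auto simp: ac_simps)
  also have "\<dots> = (\<integral>\<^sup>+ x. ennreal (h x * indicator (E \<inter> B) x) \<partial>M)"
    using assms(2,3) by (intro nn_integral_mult_cond_prob[OF assms(1) _ assms(4,5)]) auto
  finally show ?thesis .
qed

lemma set_integral_indicator_eq_cond_prob_ratio:
  assumes "finite_measure M" "U \<in> sets M" "c \<in> sets M" "U \<subseteq> c"
    and "C' \<in> sets F" "C \<inter> c = C' \<inter> c"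
  shows "(\<integral>x\<in>C. indicator U x \<partial>M) = (\<integral>x\<in>C. indicator c x * (cond_prob M F U x / cond_prob M F c x) \<partial>M)"
proof -
  interpret finite_measure M by fact
  have [measurable]: "U \<in> sets M" "c \<in> sets M" "C' \<in> sets F" by fact+
  have [measurable]: "C' \<in> sets M"
    using assms(5) subalg by (auto simp: subalgebra_def)
  define r where "r x = cond_prob M F U x / cond_prob M F c x" for x
  have [measurable]: "r \<in> borel_measurable F"
    unfolding r_def by (intro borel_measurable_divide borel_measurable_cond_prob)
  have [measurable]: "r \<in> borel_measurable M"
    unfolding r_def by measurable
  have trace: "x \<in> c \<Longrightarrow> x \<in> C \<longleftrightarrow> x \<in> C'" for x
    using assms(6) by blast
  have bounds: "AE x in M. 0 \<le> cond_prob M F U x \<and> cond_prob M F U x \<le> cond_prob M F c x"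
    using AE_cond_prob_nonneg[OF assms(2)] AE_cond_prob_mono[OF assms(1-4)] by auto
  have "(\<integral>x\<in>C. indicator U x \<partial>M) = (\<integral>x. indicator C' x * indicator U x \<partial>M :: real)"
    unfolding set_lebesgue_integral_def
    using trace assms(4) by (intro Bochner_Integration.integral_cong) (auto simp: indicator_def)
  also have "\<dots> = (\<integral>x. indicator C' x * cond_prob M F U x \<partial>M)"
    unfolding cond_prob_def
    by (rule real_cond_exp_intg(2)[symmetric])
      (auto intro!: integrable_const_bound[where B=1] simp: indicator_def)
  also have "\<dots> = (\<integral>x. (indicator C' x * r x) * cond_prob M F c x \<partial>M)"
    using bounds by (intro integral_cong_AE) (auto simp: r_def)
  also have "\<dots> = (\<integral>x. indicator C' x * r x * indicator c x \<partial>M)"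
    unfolding cond_prob_def
  proof (rule real_cond_exp_intg(2))
    have "AE x in M. 0 \<le> r x \<and> r x \<le> 1"
      using bounds by eventually_elim (auto simp: r_def divide_le_eq_1)
    then show "integrable M (\<lambda>x. indicator C' x * r x * indicator c x)"
      by (intro integrable_const_bound[where B=1]) (auto simp: indicator_def)
  qed auto
  also have "\<dots> = (\<integral>x\<in>C. indicator c x * r x \<partial>M)"
    unfolding set_lebesgue_integral_def
    using trace by (intro Bochner_Integration.integral_cong) (auto simp: indicator_def)
  finally show ?thesis by (simp add: r_def)
qed

end

lemma sets_sigma_gen_pair_trace_level_set:
  assumes "X \<in> measurable M MX"
    and "C \<in> sets (sigma_gen M (\<lambda>\<omega>. (X \<omega>, D \<omega>)) (MX \<Otimes>\<^sub>M count_space UNIV))"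
  obtains C' where "C' \<in> sets (sigma_gen M X MX)"
    and "C \<inter> {\<omega>\<in>space M. D \<omega> = d} = C' \<inter> {\<omega>\<in>space M. D \<omega> = d}"
proof -
  obtain Q where Q: "Q \<in> sets (MX \<Otimes>\<^sub>M count_space UNIV)"
    and C: "C = (\<lambda>\<omega>. (X \<omega>, D \<omega>)) -` Q \<inter> space M"
    using assms measurable_space[OF assms(1)]
    by (auto simp: sigma_gen_def sets_vimage_algebra2 space_pair_measure)
  define Q' where "Q' = (\<lambda>x. (x, d)) -` Q \<inter> space MX"
  have "Q' \<in> sets MX"
    unfolding Q'_def by (rule measurable_sets[OF _ Q]) simp
  then have "X -` Q' \<inter> space M \<in> sets (sigma_gen M X MX)"
    unfolding sigma_gen_def by (rule in_vimage_algebra)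
  moreover have "C \<inter> {\<omega>\<in>space M. D \<omega> = d} = (X -` Q' \<inter> space M) \<inter> {\<omega>\<in>space M. D \<omega> = d}"
    using measurable_space[OF assms(1)] by (auto simp: C Q'_def)
  ultimately show ?thesis by (rule that)
qed

lemma cond_prob_sigma_gen_pair_Int_level_set:
  fixes D :: "'a \<Rightarrow> 'd" and d :: 'd
  assumes "finite_measure M" "X \<in> measurable M MX" "D \<in> measurable M (count_space UNIV)"
    and "T \<in> sets M"
  defines "c \<equiv> {\<omega>\<in>space M. D \<omega> = d}"
  shows "AE \<omega> in M.
    cond_prob M (sigma_gen M (\<lambda>\<omega>. (X \<omega>, D \<omega>)) (MX \<Otimes>\<^sub>M count_space UNIV)) (T \<inter> c) \<omega>
      = indicator c \<omega> * (cond_prob M (sigma_gen M X MX) (T \<inter> c) \<omega> / cond_prob M (sigma_gen M X MX) c \<omega>)"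
proof -
  interpret finite_measure M by fact
  let ?G = "sigma_gen M (\<lambda>\<omega>. (X \<omega>, D \<omega>)) (MX \<Otimes>\<^sub>M count_space UNIV)"
  let ?F = "sigma_gen M X MX"
  define r where "r x = cond_prob M ?F (T \<inter> c) x / cond_prob M ?F c x" for x
  have [measurable]: "X \<in> measurable M MX" "D \<in> measurable M (count_space UNIV)" "T \<in> sets M" by fact+
  have XD: "(\<lambda>\<omega>. (X \<omega>, D \<omega>)) \<in> measurable M (MX \<Otimes>\<^sub>M count_space UNIV)" by measurable
  interpret G: sigma_finite_subalgebra M ?G
    by (rule sigma_finite_subalgebra_sigma_gen[OF assms(1) XD])
  interpret F: sigma_finite_subalgebra M ?F
    by (rule sigma_finite_subalgebra_sigma_gen[OF assms(1,2)])
  have cM [measurable]: "c \<in> sets M" unfolding c_def by measurable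
  have cG: "c \<in> sets ?G"
    using level_set_in_sigma_gen[OF XD measurable_snd] by (simp add: c_def)
  have "r \<in> borel_measurable ?F"
    unfolding r_def by (intro borel_measurable_divide borel_measurable_cond_prob)
  moreover have "subalgebra ?G ?F"
    using subalgebra_sigma_gen_comp[OF XD measurable_fst] by (simp only: fst_conv)
  ultimately have rG: "r \<in> borel_measurable ?G"
    by (rule measurable_from_subalg[rotated])
  have "AE x in M. 0 \<le> cond_prob M ?F (T \<inter> c) x"
    by (rule F.AE_cond_prob_nonneg) simp
  moreover have "AE x in M. cond_prob M ?F (T \<inter> c) x \<le> cond_prob M ?F c x"
    by (rule F.AE_cond_prob_mono[OF assms(1)]) auto
  ultimately have "AE x in M. 0 \<le> r x \<and> r x \<le> 1"
    by eventually_elim (auto simp: r_def divide_le_eq_1)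
  then have "integrable M (\<lambda>x. indicator c x * r x)"
    using measurable_from_subalg[OF G.subalg rG]
    by (intro integrable_const_bound[where B=1]) (auto simp: indicator_def)
  then have "AE x in M. real_cond_exp M ?G (indicator (T \<inter> c)) x = indicator c x * r x"
  proof (rule G.real_cond_exp_charact[rotated 2])
    fix C assume "C \<in> sets ?G"
    then obtain C' where "C' \<in> sets ?F" and "C \<inter> c = C' \<inter> c"
      unfolding c_def by (rule sets_sigma_gen_pair_trace_level_set[OF assms(2)])
    then show "(\<integral>x\<in>C. indicator (T \<inter> c) x \<partial>M) = (\<integral>x\<in>C. indicator c x * r x \<partial>M)"
      unfolding r_def by (intro F.set_integral_indicator_eq_cond_prob_ratio) (use assms(1) in auto)
  next
    show "integrable M (indicator (T \<inter> c) :: 'a \<Rightarrow> real)"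
      by (intro integrable_const_bound[where B=1]) auto
    show "(\<lambda>x. indicator c x * r x) \<in> borel_measurable ?G"
      using borel_measurable_indicator[OF cG] rG by (rule borel_measurable_times)
  qed
  then show ?thesis
    by (simp add: cond_prob_def r_def)
qed

lemma cond_prob_sigma_gen_pair_on_level_set:
  fixes D :: "'a \<Rightarrow> 'd" and d :: 'd
  assumes "finite_measure M" "X \<in> measurable M MX" "D \<in> measurable M (count_space UNIV)"
    and "T \<in> sets M"
  defines "c \<equiv> {\<omega>\<in>space M. D \<omega> = d}"
  shows "AE \<omega> in M. D \<omega> = d \<longrightarrow>
    cond_prob M (sigma_gen M (\<lambda>\<omega>. (X \<omega>, D \<omega>)) (MX \<Otimes>\<^sub>M count_space UNIV)) T \<omega>
      = cond_prob M (sigma_gen M X MX) (T \<inter> c) \<omega> / cond_prob M (sigma_gen M X MX) c \<omega>"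
proof -
  interpret finite_measure M by fact
  let ?G = "sigma_gen M (\<lambda>\<omega>. (X \<omega>, D \<omega>)) (MX \<Otimes>\<^sub>M count_space UNIV)"
  have [measurable]: "X \<in> measurable M MX" "D \<in> measurable M (count_space UNIV)" "T \<in> sets M" by fact+
  have XD: "(\<lambda>\<omega>. (X \<omega>, D \<omega>)) \<in> measurable M (MX \<Otimes>\<^sub>M count_space UNIV)" by measurable
  interpret G: sigma_finite_subalgebra M ?G
    by (rule sigma_finite_subalgebra_sigma_gen[OF assms(1) XD])
  have [measurable]: "c \<in> sets M" unfolding c_def by measurable
  have cG: "c \<in> sets ?G"
    using level_set_in_sigma_gen[OF XD measurable_snd] by (simp add: c_def)
  have "AE x in M. real_cond_exp M ?G (\<lambda>x. indicator c x * indicator T x) x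
      = indicator c x * real_cond_exp M ?G (indicator T) x"
    by (rule G.real_cond_exp_mult[OF borel_measurable_indicator[OF cG]])
      (auto intro: integrable_const_bound[where B=1] simp: indicator_def)
  moreover have "(\<lambda>x. indicator c x * indicator T x) = (indicator (T \<inter> c) :: 'a \<Rightarrow> real)"
    by (auto simp: fun_eq_iff indicator_def)
  ultimately have "AE x in M. cond_prob M ?G (T \<inter> c) x = indicator c x * cond_prob M ?G T x"
    by (simp add: cond_prob_def)
  then show ?thesis
    using cond_prob_sigma_gen_pair_Int_level_set[OF assms(1-4), of d] AE_space
  proof eventually_elim
    case (elim \<omega>)
    show ?case
    proof
      assume "D \<omega> = d"
      with elim(3) have "indicator c \<omega> = (1 :: real)" by (simp add: c_def)
      with elim(1,2) show "cond_prob M ?G T \<omega> = cond_prob M (sigma_gen M X MX) (T \<inter> c) \<omega>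
          / cond_prob M (sigma_gen M X MX) c \<omega>"
        by (simp add: c_def)
    qed
  qed
qed

lemma integral_mult_eq_if_weighted_preimages_eq:
  fixes Y f g :: "'a \<Rightarrow> real"
  assumes [measurable]: "Y \<in> borel_measurable M" "f \<in> borel_measurable M" "g \<in> borel_measurable M"
    and "AE x in M. 0 \<le> f x" "AE x in M. 0 \<le> g x"
    and "\<And>B. B \<in> sets borel \<Longrightarrow>
      (\<integral>\<^sup>+ x. ennreal (f x * indicator (Y -` B \<inter> space M) x) \<partial>M)
      = (\<integral>\<^sup>+ x. ennreal (g x * indicator (Y -` B \<inter> space M) x) \<partial>M)"
  shows "(\<integral>x. f x * Y x \<partial>M) = (\<integral>x. g x * Y x \<partial>M)"
proof -
  have law: "emeasure (distr (density M h) borel Y) B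
      = (\<integral>\<^sup>+ x. ennreal (h x * indicator (Y -` B \<inter> space M) x) \<partial>M)"
    if "B \<in> sets borel" "h \<in> borel_measurable M" "AE x in M. 0 \<le> h x" for B h
  proof -
    have "emeasure (distr (density M h) borel Y) B = (\<integral>\<^sup>+ x\<in>Y -` B \<inter> space M. ennreal (h x) \<partial>M)"
      using that by (simp add: emeasure_distr emeasure_density)
    also have "\<dots> = (\<integral>\<^sup>+ x. ennreal (h x * indicator (Y -` B \<inter> space M) x) \<partial>M)"
      using that(3) by (intro nn_integral_cong_AE) (auto simp: ennreal_mult' ennreal_indicator)
    finally show ?thesis .
  qed
  have mean: "(\<integral>y. y \<partial>distr (density M h) borel Y) = (\<integral>x. h x * Y x \<partial>M)"
    if [measurable]: "h \<in> borel_measurable M" "AE x in M. 0 \<le> h x" for h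
    using that by (simp add: integral_distr integral_density)
  have "distr (density M f) borel Y = distr (density M g) borel Y"
    by (rule measure_eqI) (auto simp: law assms)
  then show ?thesis
    using mean assms(4,5) by (metis assms(2,3))
qed

locale survey_population = prob_space M for M :: "'a measure" +
  fixes Y :: "'a \<Rightarrow> real" and S A :: "'a \<Rightarrow> nat"
    and XP :: "'a \<Rightarrow> 'p" and XS :: "'a \<Rightarrow> 's" and MP :: "'p measure" and MS :: "'s measure"
    and j :: nat
  assumes Y_measurable [measurable]: "Y \<in> borel_measurable M"
    and S_measurable [measurable]: "S \<in> measurable M (count_space UNIV)"
    and A_measurable [measurable]: "A \<in> measurable M (count_space UNIV)"
    and XP_measurable [measurable]: "XP \<in> measurable M MP"
    and XS_measurable [measurable]: "XS \<in> measurable M MS"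
begin

abbreviation "area \<equiv> {\<omega>\<in>space M. A \<omega> = j}"
abbreviation "sampled \<equiv> {\<omega>\<in>space M. S \<omega> = 1}"

abbreviation "F_P \<equiv> sigma_gen M XP MP"
abbreviation "F_PA \<equiv> sigma_gen M (\<lambda>\<omega>. (XP \<omega>, A \<omega>)) (MP \<Otimes>\<^sub>M count_space UNIV)"
abbreviation "F_PS \<equiv> sigma_gen M (\<lambda>\<omega>. (XP \<omega>, S \<omega>)) (MP \<Otimes>\<^sub>M count_space UNIV)"
abbreviation "F_PXS \<equiv> sigma_gen M (\<lambda>\<omega>. (XP \<omega>, XS \<omega>, S \<omega>)) (MP \<Otimes>\<^sub>M MS \<Otimes>\<^sub>M count_space UNIV)"

lemma area_in_sets [measurable]: "area \<in> sets M"
  by measurable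

lemma sampled_in_sets [measurable]: "sampled \<in> sets M"
  by measurable

sublocale F_P: sigma_finite_subalgebra M F_P
  by (rule sigma_finite_subalgebra_sigma_gen[OF finite_measure_axioms]) measurable

sublocale F_PA: sigma_finite_subalgebra M F_PA
  by (rule sigma_finite_subalgebra_sigma_gen[OF finite_measure_axioms]) measurable

sublocale F_PS: sigma_finite_subalgebra M F_PS
  by (rule sigma_finite_subalgebra_sigma_gen[OF finite_measure_axioms]) measurable

sublocale F_PXS: sigma_finite_subalgebra M F_PXS
  by (rule sigma_finite_subalgebra_sigma_gen[OF finite_measure_axioms]) measurable

lemma area_in_F_PA: "area \<in> sets F_PA"
  using level_set_in_sigma_gen[OF _ measurable_snd, of "\<lambda>\<omega>. (XP \<omega>, A \<omega>)" M MP j] by simp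

lemma sampled_in_F_PXS: "sampled \<in> sets F_PXS"
  using level_set_in_sigma_gen[of "\<lambda>\<omega>. (XP \<omega>, XS \<omega>, S \<omega>)" M _ "\<lambda>x. snd (snd x)" 1]
  by simp

lemma subalgebra_F_PXS_F_P: "subalgebra F_PXS F_P"
  using subalgebra_sigma_gen_comp[of "\<lambda>\<omega>. (XP \<omega>, XS \<omega>, S \<omega>)" M _ fst MP]
  by (simp only: fst_conv) measurable

lemma cond_prob_F_PA_sampled_on_area:
  "AE \<omega> in M. A \<omega> = j \<longrightarrow>
    cond_prob M F_PA sampled \<omega> = cond_prob M F_P (sampled \<inter> area) \<omega> / cond_prob M F_P area \<omega>"
  by (rule cond_prob_sigma_gen_pair_on_level_set[OF finite_measure_axioms]) measurable

lemma cond_prob_F_PS_area_on_sampled: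
  "AE \<omega> in M. S \<omega> = 1 \<longrightarrow>
    cond_prob M F_PS area \<omega> = cond_prob M F_P (sampled \<inter> area) \<omega> / cond_prob M F_P sampled \<omega>"
  using cond_prob_sigma_gen_pair_on_level_set[OF finite_measure_axioms XP_measurable S_measurable area_in_sets, of 1]
  by (simp add: Int_commute)

lemma nn_integral_area_reweight_sampling:
  assumes sampling_indep: "cond_indep_on M (space M) F_PA (sigma_gen M Y borel) (sigma_gen M S (count_space UNIV))"
    and sampling_pos: "AE \<omega> in M. 0 < cond_prob M F_PA sampled \<omega>"
    and E: "E \<in> sets (sigma_gen M Y borel)"
  shows "(\<integral>\<^sup>+ x. ennreal (indicator area x * indicator E x) \<partial>M)
       = (\<integral>\<^sup>+ x. ennreal (indicator sampled x * (cond_prob M F_P area x / cond_prob M F_P (sampled \<inter> area) x)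
                         * indicator (E \<inter> area) x) \<partial>M)"
proof -
  let ?\<pi> = "cond_prob M F_PA sampled"
  have EM: "E \<in> sets M" using E sets_sigma_gen_subset[OF Y_measurable] by blast
  have "sampled \<in> sets (sigma_gen M S (count_space UNIV))"
    using level_set_in_sigma_gen[OF S_measurable measurable_ident_sets[OF refl], of 1] by simp
  then have indep: "AE x in M. cond_prob M F_PA (E \<inter> sampled) x = cond_prob M F_PA E x * ?\<pi> x"
    using sampling_indep E unfolding cond_indep_on_def by auto
  have h: "(\<lambda>x. indicator area x / ?\<pi> x) \<in> borel_measurable F_PA"
    by (intro borel_measurable_divide borel_measurable_indicator area_in_F_PA borel_measurable_cond_prob)
  have "(\<integral>\<^sup>+ x. ennreal (indicator area x * indicator E x) \<partial>M)
      = (\<integral>\<^sup>+ x. ennreal (indicator area x / ?\<pi> x * ?\<pi> x * indicator E x) \<partial>M)"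
    using sampling_pos by (intro nn_integral_cong_AE) auto
  also have "\<dots> = (\<integral>\<^sup>+ x. ennreal (indicator area x / ?\<pi> x * indicator (E \<inter> sampled) x) \<partial>M)"
    by (rule F_PA.nn_integral_mult_cond_prob_cond_indep[OF finite_measure_axioms EM sampled_in_sets h])
      (use sampling_pos indep in auto)
  also have "\<dots> = (\<integral>\<^sup>+ x. ennreal (indicator sampled x * (cond_prob M F_P area x / cond_prob M F_P (sampled \<inter> area) x)
                         * indicator (E \<inter> area) x) \<partial>M)"
    using cond_prob_F_PA_sampled_on_area by (intro nn_integral_cong_AE) (auto simp: indicator_def)
  finally show ?thesis .
qed

definition weight :: "'a \<Rightarrow> real" where
  "weight \<omega> = indicator sampled \<omega>
     * (cond_prob M F_PXS area \<omega> / cond_prob M F_PS area \<omega>)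
     * (cond_prob M F_P area \<omega> / cond_prob M F_P sampled \<omega>)"

lemma weight_measurable [measurable]: "weight \<in> borel_measurable M"
  unfolding weight_def by measurable

lemma weight_nonneg: "AE \<omega> in M. 0 \<le> weight \<omega>"
  using F_PXS.AE_cond_prob_nonneg[OF area_in_sets] F_PS.AE_cond_prob_nonneg[OF area_in_sets]
    F_P.AE_cond_prob_nonneg[OF area_in_sets] F_P.AE_cond_prob_nonneg[OF sampled_in_sets]
  by eventually_elim (simp add: weight_def)

lemma nn_integral_weight_reweight_area:
  assumes area_indep: "cond_indep_on M sampled F_PXS (sigma_gen M Y borel) (sigma_gen M A (count_space UNIV))"
    and E: "E \<in> sets (sigma_gen M Y borel)"
  shows "(\<integral>\<^sup>+ x. ennreal (weight x * indicator E x) \<partial>M)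
       = (\<integral>\<^sup>+ x. ennreal (indicator sampled x * (cond_prob M F_P area x / cond_prob M F_P (sampled \<inter> area) x)
                         * indicator (E \<inter> area) x) \<partial>M)"
proof -
  let ?p = "cond_prob M F_P area" and ?q = "cond_prob M F_P sampled"
    and ?\<rho> = "cond_prob M F_P (sampled \<inter> area)" and ?e = "cond_prob M F_PXS area"
  let ?h = "\<lambda>x. indicator sampled x * (?p x / ?\<rho> x)"
  have EM: "E \<in> sets M" using E sets_sigma_gen_subset[OF Y_measurable] by blast
  have "area \<in> sets (sigma_gen M A (count_space UNIV))"
    using level_set_in_sigma_gen[OF A_measurable measurable_ident_sets[OF refl], of j] by simp
  then have "AE x in M. x \<in> sampled \<longrightarrow> cond_prob M F_PXS (E \<inter> area) x = cond_prob M F_PXS E x * ?e x"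
    using area_indep E unfolding cond_indep_on_def by blast
  then have indep: "AE x in M. ?h x \<noteq> 0 \<longrightarrow> cond_prob M F_PXS (E \<inter> area) x = cond_prob M F_PXS E x * ?e x"
    by eventually_elim (auto simp: indicator_def)
  have "(\<lambda>x. ?p x / ?\<rho> x) \<in> borel_measurable F_PXS"
    by (intro measurable_from_subalg[OF subalgebra_F_PXS_F_P] borel_measurable_divide borel_measurable_cond_prob)
  then have h: "?h \<in> borel_measurable F_PXS"
    by (intro borel_measurable_times borel_measurable_indicator sampled_in_F_PXS)
  have h_nonneg: "AE x in M. 0 \<le> ?h x"
    using F_P.AE_cond_prob_nonneg[OF area_in_sets] F_P.AE_cond_prob_nonneg[OF sets.Int[OF sampled_in_sets area_in_sets]]
    by eventually_elim auto
  \<comment> \<open>On the sample \<open>P(A = j | XP, S = 1) = \<rho> / q\<close>; if \<open>q = 0\<close> then \<open>\<rho> = 0\<close> and both sides are the junk value 0.\<close>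
  have cancel: "e / (r / q) * (p / q) = p / r * e" if "0 \<le> r" "r \<le> q" for e r q p :: real
    using that by (cases "q = 0"; cases "r = 0") (auto simp: field_simps)
  have "AE x in M. weight x = ?h x * ?e x"
    using cond_prob_F_PS_area_on_sampled F_P.AE_cond_prob_nonneg[OF sets.Int[OF sampled_in_sets area_in_sets]]
      F_P.AE_cond_prob_mono[OF finite_measure_axioms sets.Int[OF sampled_in_sets area_in_sets] sampled_in_sets Int_lower1]
  proof eventually_elim
    case (elim x)
    then show ?case
      by (cases "S x = 1") (simp_all add: weight_def cancel)
  qed
  then have "(\<integral>\<^sup>+ x. ennreal (weight x * indicator E x) \<partial>M)
      = (\<integral>\<^sup>+ x. ennreal (?h x * ?e x * indicator E x) \<partial>M)"
    by (intro nn_integral_cong_AE) auto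
  also have "\<dots> = (\<integral>\<^sup>+ x. ennreal (?h x * indicator (E \<inter> area) x) \<partial>M)"
    by (rule F_PXS.nn_integral_mult_cond_prob_cond_indep[OF finite_measure_axioms EM area_in_sets h h_nonneg indep])
  finally show ?thesis .
qed

lemma event_mean_area_eq_weighted_integral:
  assumes "cond_indep_on M (space M) F_PA (sigma_gen M Y borel) (sigma_gen M S (count_space UNIV))"
    and "AE \<omega> in M. 0 < cond_prob M F_PA sampled \<omega>"
    and "cond_indep_on M sampled F_PXS (sigma_gen M Y borel) (sigma_gen M A (count_space UNIV))"
  shows "event_mean M Y area =
    (\<integral>\<omega>. indicator sampled \<omega> / measure M area
        * (cond_prob M F_PXS area \<omega> / cond_prob M F_PS area \<omega>)
        * (cond_prob M F_P area \<omega> / cond_prob M F_P sampled \<omega>)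
        * Y \<omega> \<partial>M)"
proof -
  have "(\<integral>\<omega>. indicator area \<omega> * Y \<omega> \<partial>M) = (\<integral>\<omega>. weight \<omega> * Y \<omega> \<partial>M)"
  proof (rule integral_mult_eq_if_weighted_preimages_eq[OF Y_measurable _ weight_measurable _ weight_nonneg])
    fix B :: "real set" assume "B \<in> sets borel"
    then have "Y -` B \<inter> space M \<in> sets (sigma_gen M Y borel)"
      unfolding sigma_gen_def by (rule in_vimage_algebra)
    then show "(\<integral>\<^sup>+ x. ennreal (indicator area x * indicator (Y -` B \<inter> space M) x) \<partial>M)
        = (\<integral>\<^sup>+ x. ennreal (weight x * indicator (Y -` B \<inter> space M) x) \<partial>M)"
      using nn_integral_area_reweight_sampling[OF assms(1,2)] nn_integral_weight_reweight_area[OF assms(3)]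
      by simp
  qed (simp_all add: borel_measurable_indicator)
  moreover have "(\<lambda>\<omega>. indicator sampled \<omega> / measure M area
        * (cond_prob M F_PXS area \<omega> / cond_prob M F_PS area \<omega>)
        * (cond_prob M F_P area \<omega> / cond_prob M F_P sampled \<omega>) * Y \<omega>)
      = (\<lambda>\<omega>. weight \<omega> * Y \<omega> / measure M area)"
    by (simp add: fun_eq_iff weight_def)
  ultimately show ?thesis
    by (simp add: event_mean_def integral_divide_zero)
qed

end

theorem proposition1:
  fixes M :: "'a measure"
    and Y :: "'a \<Rightarrow> real" and S :: "'a \<Rightarrow> nat" and A :: "'a \<Rightarrow> nat"
    and XP :: "'a \<Rightarrow> 'p" and XS :: "'a \<Rightarrow> 's"
    and MP :: "'p measure" and MS :: "'s measure"
    and J j :: nat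
  assumes "prob_space M"
    and "Y \<in> borel_measurable M" and "integrable M Y"
    and "S \<in> measurable M (count_space UNIV)" and "\<forall>\<omega>\<in>space M. S \<omega> \<in> {0, 1}"
    and "A \<in> measurable M (count_space UNIV)" and "\<forall>\<omega>\<in>space M. A \<omega> \<in> {1..J}"
    and "XP \<in> measurable M MP" and "XS \<in> measurable M MS"
    and "j \<in> {1..J}"
    and "measure M {\<omega>\<in>space M. A \<omega> = j} > 0"
    \<comment> \<open>Sampling ignorability (a): Y independent of S given (XP, A)\<close>
    and "cond_indep_on M (space M)
           (sigma_gen M (\<lambda>\<omega>. (XP \<omega>, A \<omega>)) (MP \<Otimes>\<^sub>M count_space UNIV))
           (sigma_gen M Y borel) (sigma_gen M S (count_space UNIV))"
    \<comment> \<open>Sampling ignorability (b): positivity\<close>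
    and "AE \<omega> in M.
           0 < cond_prob M (sigma_gen M (\<lambda>\<omega>. (XP \<omega>, A \<omega>)) (MP \<Otimes>\<^sub>M count_space UNIV))
                 {\<omega>\<in>space M. S \<omega> = 1} \<omega> \<and>
           cond_prob M (sigma_gen M (\<lambda>\<omega>. (XP \<omega>, A \<omega>)) (MP \<Otimes>\<^sub>M count_space UNIV))
                 {\<omega>\<in>space M. S \<omega> = 1} \<omega> < 1"
    \<comment> \<open>Area ignorability (a): Y independent of A given (XP, XS), on S = 1\<close>
    and "cond_indep_on M {\<omega>\<in>space M. S \<omega> = 1}
           (sigma_gen M (\<lambda>\<omega>. (XP \<omega>, XS \<omega>, S \<omega>)) (MP \<Otimes>\<^sub>M MS \<Otimes>\<^sub>M count_space UNIV))
           (sigma_gen M Y borel) (sigma_gen M A (count_space UNIV))"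
    \<comment> \<open>Area ignorability (b): positivity on S = 1\<close>
    and "AE \<omega> in M. S \<omega> = 1 \<longrightarrow>
           0 < cond_prob M (sigma_gen M (\<lambda>\<omega>. (XP \<omega>, XS \<omega>, S \<omega>)) (MP \<Otimes>\<^sub>M MS \<Otimes>\<^sub>M count_space UNIV))
                 {\<omega>\<in>space M. A \<omega> = j} \<omega> \<and>
           cond_prob M (sigma_gen M (\<lambda>\<omega>. (XP \<omega>, XS \<omega>, S \<omega>)) (MP \<Otimes>\<^sub>M MS \<Otimes>\<^sub>M count_space UNIV))
                 {\<omega>\<in>space M. A \<omega> = j} \<omega> < 1"
  shows "event_mean M Y {\<omega>\<in>space M. A \<omega> = j} =
    (\<integral>\<omega>. indicator {\<omega>\<in>space M. S \<omega> = 1} \<omega> / measure M {\<omega>\<in>space M. A \<omega> = j}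
        * (cond_prob M (sigma_gen M (\<lambda>\<omega>. (XP \<omega>, XS \<omega>, S \<omega>)) (MP \<Otimes>\<^sub>M MS \<Otimes>\<^sub>M count_space UNIV))
               {\<omega>\<in>space M. A \<omega> = j} \<omega>
           / cond_prob M (sigma_gen M (\<lambda>\<omega>. (XP \<omega>, S \<omega>)) (MP \<Otimes>\<^sub>M count_space UNIV))
               {\<omega>\<in>space M. A \<omega> = j} \<omega>)
        * (cond_prob M (sigma_gen M XP MP) {\<omega>\<in>space M. A \<omega> = j} \<omega>
           / cond_prob M (sigma_gen M XP MP) {\<omega>\<in>space M. S \<omega> = 1} \<omega>)
        * Y \<omega> \<partial>M)"
proof -
  interpret survey_population M Y S A XP XS MP MS j
    by (intro survey_population.intro survey_population_axioms.intro) (fact assms)+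
  have "AE \<omega> in M. 0 < cond_prob M F_PA sampled \<omega>"
    using assms(13) by eventually_elim simp
  then show ?thesis
    by (rule event_mean_area_eq_weighted_integral[OF assms(12) _ assms(14)])
qed

end
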